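(* Let $(b(n))_{n\in\mathbb{N}}$ be a bounded sequence of complex numbers such that for every $\alpha\in[0,1]$, $$\lim_{M\to\infty}\limsup_{N\to\infty}\frac1N\sum_{n=1}^N\Big|\frac1M\sum_{m=1}^M e(m\alpha)\, b(Mn+m)\Big|=0.$$ Then $$\lim_{N\to\infty}\sup_{\alpha\in[0,1]}\Big|\frac1N\sum_{n=1}^N e(n\alpha)\, b(n)\Big|=0.$$
   Context: $e(t)=e^{2\pi i t}$ for $t\in\mathbb{R}$. *)

theory Defs
  imports "HOL-Analysis.Analysis"
begin

definition e :: "real \<Rightarrow> complex" where
  "e t = exp (2 * of_real pi * \<i> * of_real t)"

end

theory Submission
  imports Defs
begin

text \<open>Let B bound |b|. Cutting [1, N] into blocks of length M, on the k-th block e(n\<alpha>) differs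
from e(m\<alpha>) only by the unimodular factor e(Mk\<alpha>), so the average over [1, N] is at most the mean
over k of the block averages in the hypothesis, up to O(MB/N) from the first and the incomplete
block. Each block average is Lipschitz in \<alpha> with constant 2\<pi>MB, so once M is chosen for a given
\<alpha>, smallness propagates to a fixed neighbourhood of \<alpha>, uniformly in large N. Compactness of
[0, 1] then makes the bound uniform in \<alpha>.\<close>

lemma e_add: "e (x + y) = e x * e y"
  unfolding e_def by (simp add: exp_add[symmetric] algebra_simps)

lemma norm_e [simp]: "cmod (e x) = 1"
  unfolding e_def by (simp add: norm_exp_eq_Re)

lemma norm_e_diff_le: "cmod (e x - e y) \<le> 2 * pi * \<bar>x - y\<bar>"
proof -
  have "e x - e y = e y * (e (x - y) - 1)"
    using e_add[of y "x - y"] by (simp add: algebra_simps)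
  then have "cmod (e x - e y) = cmod (e (x - y) - 1)"
    by (simp add: norm_mult)
  also have "e (x - y) = exp (\<i> * of_real (2 * pi * (x - y)))"
    unfolding e_def by (simp add: algebra_simps)
  also have "cmod (exp (\<i> * of_real (2 * pi * (x - y))) - 1) = 2 * \<bar>sin (2 * pi * (x - y) / 2)\<bar>"
    by (rule dist_exp_i_1)
  also have "\<dots> \<le> 2 * \<bar>2 * pi * (x - y) / 2\<bar>"
    using abs_sin_x_le_abs_x by simp
  finally show ?thesis by (simp add: abs_mult)
qed

lemma norm_bound_nonneg:
  fixes b :: "'a \<Rightarrow> 'b::real_normed_vector"
  assumes "\<And>n. norm (b n) \<le> B"
  shows "B \<ge> 0"
  using assms norm_ge_zero order_trans by blast

lemma norm_sum_e_mult_le: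
  assumes "\<And>n. n \<in> A \<Longrightarrow> cmod (c n) \<le> B"
  shows "cmod (\<Sum>n\<in>A. e (t n) * c n) \<le> real (card A) * B"
proof -
  have "cmod (\<Sum>n\<in>A. e (t n) * c n) \<le> (\<Sum>n\<in>A. B)"
    by (rule sum_norm_le) (simp add: norm_mult assms)
  then show ?thesis by simp
qed

lemma sum_atLeast1_atMost_mult_blocks:
  fixes f :: "nat \<Rightarrow> 'a::comm_monoid_add"
  shows "(\<Sum>n=1..M * K. f n) = (\<Sum>k<K. \<Sum>m=1..M. f (M * k + m))"
proof (induction K)
  case 0
  then show ?case by simp
next
  case (Suc K)
  have "(\<Sum>n=1..M * K + M. f n) = (\<Sum>n=1..M * K. f n) + (\<Sum>n=M * K + 1..M * K + M. f n)"
    by (rule sum.ub_add_nat) simp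
  also have "(\<Sum>n=M * K + 1..M * K + M. f n) = (\<Sum>m=1..M. f (M * K + m))"
    using sum.shift_bounds_cl_nat_ivl[of f 1 "M * K" M] by (simp add: add.commute)
  finally show ?case using Suc by (simp add: add.commute)
qed

lemma eventually_forall_compact:
  assumes "compact S"
    and "\<And>x. x \<in> S \<Longrightarrow> \<exists>U. open U \<and> x \<in> U \<and> eventually (\<lambda>i. \<forall>y\<in>U. P i y) F"
  shows "eventually (\<lambda>i. \<forall>y\<in>S. P i y) F"
proof -
  obtain U where U: "\<And>x. x \<in> S \<Longrightarrow> open (U x) \<and> x \<in> U x \<and> eventually (\<lambda>i. \<forall>y\<in>U x. P i y) F"
    using assms(2) by metis
  obtain T where "T \<subseteq> S" "finite T" and cover: "S \<subseteq> (\<Union>x\<in>T. U x)"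
  proof (rule compactE_image[OF assms(1), of S U])
    show "open (U x)" if "x \<in> S" for x
      using U that by blast
    show "S \<subseteq> (\<Union>x\<in>S. U x)"
      using U by blast
  qed
  then have "eventually (\<lambda>i. \<forall>x\<in>T. \<forall>y\<in>U x. P i y) F"
    using U by (subst eventually_ball_finite_distrib) auto
  then show ?thesis
    by eventually_elim (use cover in blast)
qed

lemma tendsto_SUP_zero:
  fixes f :: "'i \<Rightarrow> 'a \<Rightarrow> real"
  assumes "S \<noteq> {}" and nonneg: "\<And>i x. f i x \<ge> 0"
    and small: "\<And>\<epsilon>. \<epsilon> > 0 \<Longrightarrow> eventually (\<lambda>i. \<forall>x\<in>S. f i x \<le> \<epsilon>) F"
  shows "((\<lambda>i. SUP x\<in>S. f i x) \<longlongrightarrow> 0) F"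
proof (rule order_tendstoI)
  fix a :: real
  assume "a < 0"
  show "eventually (\<lambda>i. a < (SUP x\<in>S. f i x)) F"
    using small[OF zero_less_one]
  proof eventually_elim
    case (elim i)
    obtain x where "x \<in> S"
      using \<open>S \<noteq> {}\<close> by blast
    have "f i x \<le> (SUP x\<in>S. f i x)"
      using elim \<open>x \<in> S\<close> by (intro cSUP_upper bdd_aboveI2) auto
    then show ?case
      using nonneg[of i x] \<open>a < 0\<close> by linarith
  qed
next
  fix a :: real
  assume "a > 0"
  have "eventually (\<lambda>i. \<forall>x\<in>S. f i x \<le> a / 2) F"
    using \<open>a > 0\<close> by (intro small) simp
  then show "eventually (\<lambda>i. (SUP x\<in>S. f i x) < a) F"
  proof eventually_elim
    case (elim i)
    then have "(SUP x\<in>S. f i x) \<le> a / 2"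
      using \<open>S \<noteq> {}\<close> by (intro cSUP_least) auto
    then show ?case
      using \<open>a > 0\<close> by linarith
  qed
qed

lemma tendsto_limsup_zeroE:
  fixes g :: "nat \<Rightarrow> nat \<Rightarrow> real"
  assumes "(\<lambda>M. limsup (\<lambda>K. ereal (g M K))) \<longlonglongrightarrow> 0" and "\<epsilon> > 0"
  obtains M where "M > 0" and "eventually (\<lambda>K. g M K < \<epsilon>) sequentially"
proof -
  have "eventually (\<lambda>M. M > 0 \<and> limsup (\<lambda>K. ereal (g M K)) < ereal \<epsilon>) sequentially"
    using assms by (intro eventually_conj eventually_gt_at_top order_tendstoD(2)[OF assms(1)]) simp
  then obtain M where "M > 0" and "limsup (\<lambda>K. ereal (g M K)) < ereal \<epsilon>"
    using eventually_happens'[OF sequentially_bot] by blast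
  then have "eventually (\<lambda>K. ereal (g M K) < ereal \<epsilon>) sequentially"
    by (intro Limsup_lessD)
  then show ?thesis
    using \<open>M > 0\<close> that by simp
qed

definition twisted_average :: "(nat \<Rightarrow> complex) \<Rightarrow> nat \<Rightarrow> real \<Rightarrow> real" where
  "twisted_average b N \<alpha> = cmod ((1 / of_nat N) * (\<Sum>n=1..N. e (real n * \<alpha>) * b n))"

definition block_average :: "(nat \<Rightarrow> complex) \<Rightarrow> nat \<Rightarrow> real \<Rightarrow> nat \<Rightarrow> real" where
  "block_average b M \<alpha> k = cmod ((1 / of_nat M) * (\<Sum>m=1..M. e (real m * \<alpha>) * b (M * k + m)))"

definition mean_block_average :: "(nat \<Rightarrow> complex) \<Rightarrow> nat \<Rightarrow> real \<Rightarrow> nat \<Rightarrow> real" where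
  "mean_block_average b M \<alpha> K = (1 / real K) * (\<Sum>k=1..K. block_average b M \<alpha> k)"

lemma block_average_nonneg: "block_average b M \<alpha> k \<ge> 0"
  unfolding block_average_def by simp

lemma mean_block_average_nonneg: "mean_block_average b M \<alpha> K \<ge> 0"
  unfolding mean_block_average_def by (simp add: block_average_nonneg sum_nonneg)

lemma of_nat_mult_block_average:
  "real M * block_average b M \<alpha> k = cmod (\<Sum>m=1..M. e (real m * \<alpha>) * b (M * k + m))"
  unfolding block_average_def by (cases "M = 0") (auto simp: norm_mult norm_divide)

lemma of_nat_mult_mean_block_average:
  "real K * mean_block_average b M \<alpha> K = (\<Sum>k=1..K. block_average b M \<alpha> k)"
  unfolding mean_block_average_def by (cases "K = 0") auto

lemma block_average_le:
  assumes "\<And>n. cmod (b n) \<le> B"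
  shows "block_average b M \<alpha> k \<le> B"
proof -
  have "real M * block_average b M \<alpha> k \<le> real (card {1..M}) * B"
    unfolding of_nat_mult_block_average using assms by (intro norm_sum_e_mult_le)
  then show ?thesis
    using norm_bound_nonneg[OF assms] by (cases "M = 0") (auto simp: block_average_def mult_le_cancel_left_pos)
qed

lemma block_average_Lipschitz:
  assumes B: "\<And>n. cmod (b n) \<le> B"
  shows "block_average b M \<beta> k \<le> block_average b M \<alpha> k + 2 * pi * real M * B * \<bar>\<beta> - \<alpha>\<bar>"
proof -
  define c where "c m = b (M * k + m)" for m
  have diff: "cmod ((e (real m * \<beta>) - e (real m * \<alpha>)) * c m) \<le> 2 * pi * real M * \<bar>\<beta> - \<alpha>\<bar> * B"
    if "m \<in> {1..M}" for m
  proof -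
    have "cmod (e (real m * \<beta>) - e (real m * \<alpha>)) \<le> 2 * pi * (real m * \<bar>\<beta> - \<alpha>\<bar>)"
      using norm_e_diff_le[of "real m * \<beta>" "real m * \<alpha>"]
      by (simp add: right_diff_distrib[symmetric] abs_mult)
    also have "\<dots> \<le> 2 * pi * (real M * \<bar>\<beta> - \<alpha>\<bar>)"
      using that by (intro mult_left_mono mult_right_mono) auto
    finally show ?thesis
      unfolding norm_mult c_def using B by (intro mult_mono) auto
  qed
  have "real M * block_average b M \<beta> k
      \<le> cmod (\<Sum>m=1..M. e (real m * \<alpha>) * c m) + cmod (\<Sum>m=1..M. (e (real m * \<beta>) - e (real m * \<alpha>)) * c m)"
    unfolding of_nat_mult_block_average c_def[symmetric]
    by (rule order_trans[OF _ norm_triangle_ineq]) (simp add: sum.distrib[symmetric] algebra_simps)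
  also have "\<dots> \<le> real M * block_average b M \<alpha> k + real M * (2 * pi * real M * \<bar>\<beta> - \<alpha>\<bar> * B)"
    unfolding of_nat_mult_block_average c_def[symmetric]
    using sum_norm_le[of "{1..M}", OF diff] by simp
  finally have "real M * block_average b M \<beta> k
      \<le> real M * (block_average b M \<alpha> k + 2 * pi * real M * B * \<bar>\<beta> - \<alpha>\<bar>)"
    by (simp add: algebra_simps)
  then show ?thesis
    by (cases "M = 0") (auto simp: block_average_def mult_le_cancel_left_pos)
qed

lemma mean_block_average_Lipschitz:
  assumes B: "\<And>n. cmod (b n) \<le> B"
  shows "mean_block_average b M \<beta> K \<le> mean_block_average b M \<alpha> K + 2 * pi * real M * B * \<bar>\<beta> - \<alpha>\<bar>"
proof -
  have "B \<ge> 0"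
    using B by (rule norm_bound_nonneg)
  have "(\<Sum>k=1..K. block_average b M \<beta> k) \<le> (\<Sum>k=1..K. block_average b M \<alpha> k + 2 * pi * real M * B * \<bar>\<beta> - \<alpha>\<bar>)"
    by (rule sum_mono) (rule block_average_Lipschitz[OF B])
  then show ?thesis
    using \<open>B \<ge> 0\<close> unfolding mean_block_average_def
    by (cases "K = 0") (auto simp: sum.distrib field_simps)
qed

lemma norm_twisted_block_sum:
  "cmod (\<Sum>m=1..M. e (real (M * k + m) * \<alpha>) * b (M * k + m)) = real M * block_average b M \<alpha> k"
proof -
  have "(\<Sum>m=1..M. e (real (M * k + m) * \<alpha>) * b (M * k + m))
      = e (real (M * k) * \<alpha>) * (\<Sum>m=1..M. e (real m * \<alpha>) * b (M * k + m))"
    unfolding sum_distrib_left by (rule sum.cong) (auto simp: e_add[symmetric] algebra_simps)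
  then show ?thesis
    by (simp add: of_nat_mult_block_average norm_mult)
qed

text \<open>Block 0, i.e. b(1..M), is not among the blocks k = 1..K of the hypothesis and is bounded
trivially.\<close>

lemma norm_twisted_sum_complete_blocks_le:
  assumes B: "\<And>n. cmod (b n) \<le> B"
  shows "cmod (\<Sum>n=1..M * K. e (real n * \<alpha>) * b n) \<le> real M * (B + real K * mean_block_average b M \<alpha> K)"
proof -
  have "cmod (\<Sum>n=1..M * K. e (real n * \<alpha>) * b n) \<le> (\<Sum>k<K. real M * block_average b M \<alpha> k)"
    unfolding sum_atLeast1_atMost_mult_blocks norm_twisted_block_sum[symmetric] by (rule norm_sum)
  also have "\<dots> \<le> (\<Sum>k=0..K. real M * block_average b M \<alpha> k)"
    by (rule sum_mono2) (auto simp: block_average_nonneg)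
  also have "\<dots> = real M * (block_average b M \<alpha> 0 + real K * mean_block_average b M \<alpha> K)"
    by (simp add: sum.atLeast_Suc_atMost sum_distrib_left distrib_left of_nat_mult_mean_block_average)
  also have "\<dots> \<le> real M * (B + real K * mean_block_average b M \<alpha> K)"
    using block_average_le[where b=b, OF B] by (intro mult_left_mono add_right_mono) auto
  finally show ?thesis .
qed

lemma twisted_average_le_mean_block_average:
  assumes B: "\<And>n. cmod (b n) \<le> B" and "M > 0"
  shows "twisted_average b N \<alpha> \<le> mean_block_average b M \<alpha> (N div M) + 2 * real M * B / real N"
proof -
  define K where "K = N div M"
  define f where "f n = e (real n * \<alpha>) * b n" for n
  have MK: "M * K \<le> N"
    unfolding K_def by (simp add: mult.commute)
  have "N - M * K < M"
    unfolding K_def using \<open>M > 0\<close> by (metis minus_mult_div_eq_mod mod_less_divisor)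
  have "cmod (\<Sum>n=M * K + 1..N. f n) \<le> real (card {M * K + 1..N}) * B"
    unfolding f_def using B by (intro norm_sum_e_mult_le)
  also have "\<dots> = real (N - M * K) * B"
    by simp
  also have "\<dots> \<le> real M * B"
    using \<open>N - M * K < M\<close> norm_bound_nonneg[OF B] by (intro mult_right_mono) auto
  finally have tail: "cmod (\<Sum>n=M * K + 1..N. f n) \<le> real M * B" .
  have "(\<Sum>n=1..N. f n) = (\<Sum>n=1..M * K. f n) + (\<Sum>n=M * K + 1..N. f n)"
    using sum.ub_add_nat[of 1 "M * K" f "N - M * K"] MK by simp
  then have "cmod (\<Sum>n=1..N. f n) \<le> cmod (\<Sum>n=1..M * K. f n) + cmod (\<Sum>n=M * K + 1..N. f n)"
    by (simp add: norm_triangle_ineq)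
  also have "\<dots> \<le> real M * (B + real K * mean_block_average b M \<alpha> K) + real M * B"
    unfolding f_def by (intro add_mono norm_twisted_sum_complete_blocks_le[OF B] tail[unfolded f_def])
  also have "\<dots> = 2 * real M * B + real (M * K) * mean_block_average b M \<alpha> K"
    by (simp add: algebra_simps)
  also have "\<dots> \<le> 2 * real M * B + real N * mean_block_average b M \<alpha> K"
    using MK by (intro add_left_mono mult_right_mono mean_block_average_nonneg of_nat_mono)
  finally show ?thesis
    unfolding twisted_average_def f_def K_def
    by (cases "N = 0") (auto simp: mean_block_average_nonneg norm_mult norm_divide field_simps)
qed

lemma twisted_average_locally_small:
  assumes B: "\<And>n. cmod (b n) \<le> B"
    and lim: "(\<lambda>M. limsup (\<lambda>K. ereal (mean_block_average b M \<alpha> K))) \<longlonglongrightarrow> 0"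
    and "\<epsilon> > 0"
  shows "\<exists>\<delta>>0. eventually (\<lambda>N. \<forall>\<beta>\<in>ball \<alpha> \<delta>. twisted_average b N \<beta> \<le> 3 * \<epsilon>) sequentially"
proof -
  obtain M where "M > 0" and "eventually (\<lambda>K. mean_block_average b M \<alpha> K < \<epsilon>) sequentially"
    using lim \<open>\<epsilon> > 0\<close> by (rule tendsto_limsup_zeroE)
  then have mean_small: "eventually (\<lambda>N. mean_block_average b M \<alpha> (N div M) < \<epsilon>) sequentially"
    using eventually_compose_filterlim filterlim_at_top_div_const_nat by blast
  have tail_small: "eventually (\<lambda>N. 2 * real M * B / real N < \<epsilon>) sequentially"
    using \<open>\<epsilon> > 0\<close> by (intro order_tendstoD(2)[OF lim_const_over_n])
  define C where "C = 2 * pi * real M * B"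
  have "C \<ge> 0"
    unfolding C_def using norm_bound_nonneg[OF B] by simp
  define \<delta> where "\<delta> = \<epsilon> / (C + 1)"
  have "\<delta> > 0"
    unfolding \<delta>_def using \<open>C \<ge> 0\<close> \<open>\<epsilon> > 0\<close> by simp
  have Lipschitz_small: "C * \<bar>\<beta> - \<alpha>\<bar> \<le> \<epsilon>" if "\<beta> \<in> ball \<alpha> \<delta>" for \<beta>
  proof -
    have "C * \<bar>\<beta> - \<alpha>\<bar> \<le> C * \<delta>"
      using that \<open>C \<ge> 0\<close> by (intro mult_left_mono) (auto simp: dist_real_def abs_minus_commute)
    also have "\<dots> \<le> \<epsilon>"
      unfolding \<delta>_def using \<open>C \<ge> 0\<close> \<open>\<epsilon> > 0\<close> by (simp add: field_simps)
    finally show ?thesis .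
  qed
  have "eventually (\<lambda>N. \<forall>\<beta>\<in>ball \<alpha> \<delta>. twisted_average b N \<beta> \<le> 3 * \<epsilon>) sequentially"
    using mean_small tail_small
  proof eventually_elim
    case (elim N)
    show ?case
    proof
      fix \<beta>
      assume "\<beta> \<in> ball \<alpha> \<delta>"
      have "twisted_average b N \<beta> \<le> mean_block_average b M \<beta> (N div M) + 2 * real M * B / real N"
        using B \<open>M > 0\<close> by (rule twisted_average_le_mean_block_average)
      also have "\<dots> \<le> mean_block_average b M \<alpha> (N div M) + C * \<bar>\<beta> - \<alpha>\<bar> + 2 * real M * B / real N"
        unfolding C_def using mean_block_average_Lipschitz[where b=b, OF B] by simp
      finally show "twisted_average b N \<beta> \<le> 3 * \<epsilon>"
        using elim Lipschitz_small[OF \<open>\<beta> \<in> ball \<alpha> \<delta>\<close>] by linarith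
    qed
  qed
  then show ?thesis
    using \<open>\<delta> > 0\<close> by blast
qed

theorem lemma2p2:
  fixes b :: "nat \<Rightarrow> complex"
  assumes bdd: "bounded (range b)"
    and hyp: "\<forall>\<alpha>\<in>{0..1::real}.
      ((\<lambda>M::nat. limsup (\<lambda>N::nat. ereal ((1 / real N) *
          (\<Sum>n=1..N. cmod ((1 / of_nat M) * (\<Sum>m=1..M. e (real m * \<alpha>) * b (M * n + m)))))))
        \<longlonglongrightarrow> 0)"
  shows "(\<lambda>N::nat. SUP \<alpha>\<in>{0..1::real}.
            cmod ((1 / of_nat N) * (\<Sum>n=1..N. e (real n * \<alpha>) * b n))) \<longlonglongrightarrow> 0"
proof -
  obtain B where B: "\<And>n. cmod (b n) \<le> B"
    using bdd unfolding bounded_iff by auto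
  have "eventually (\<lambda>N. \<forall>\<beta>\<in>{0..1}. twisted_average b N \<beta> \<le> \<epsilon>) sequentially" if "\<epsilon> > 0" for \<epsilon>
  proof (rule eventually_forall_compact[OF compact_Icc])
    fix \<alpha> :: real
    assume "\<alpha> \<in> {0..1}"
    then have "(\<lambda>M. limsup (\<lambda>K. ereal (mean_block_average b M \<alpha> K))) \<longlonglongrightarrow> 0"
      using hyp unfolding mean_block_average_def block_average_def by simp
    then obtain \<delta> where "\<delta> > 0"
      and "eventually (\<lambda>N. \<forall>\<beta>\<in>ball \<alpha> \<delta>. twisted_average b N \<beta> \<le> \<epsilon>) sequentially"
      using twisted_average_locally_small[where b=b and \<epsilon>="\<epsilon> / 3", OF B] \<open>\<epsilon> > 0\<close> by auto
    then show "\<exists>U. open U \<and> \<alpha> \<in> U \<and> eventually (\<lambda>N. \<forall>\<beta>\<in>U. twisted_average b N \<beta> \<le> \<epsilon>) sequentially"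
      by (intro exI[of _ "ball \<alpha> \<delta>"]) auto
  qed
  then have "(\<lambda>N. SUP \<beta>\<in>{0..1::real}. twisted_average b N \<beta>) \<longlonglongrightarrow> 0"
    by (intro tendsto_SUP_zero) (auto simp: twisted_average_def)
  then show ?thesis
    unfolding twisted_average_def .
qed

end
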